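(* (Equivalence theorem for bounded approximate designs.) Let $\nu_1,\ldots,\nu_N$ and $\mu_1,\ldots,\mu_N$ be real numbers with $0\le \nu_i<\mu_i$ for all $i$, $\sum_{i=1}^N\nu_i\le 1$ and $\sum_{i=1}^N\mu_i\ge 1$. Let $\Xi$ be the set of all designs $\xi=\{(\boldsymbol{x}_i,w_i): i=1,\ldots,N\}$ with $\nu_i\le w_i\le\mu_i$ for all $i$ and $\sum_{i=1}^N w_i=1$. Let $\Phi\in\Lambda$ and let $\xi^*=\{(\boldsymbol{x}_i,w_i)\}\in\Xi$ with $\Phi(\xi^* )<\infty$. Then the following are equivalent: (I) $\xi^*$ is $\Phi$-optimal in $\Xi$, i.e. $\Phi(\xi^* )=\min_{\xi\in\Xi}\Phi(\xi)$. (II) There is a partition $\mathcal{X}=\mathcal{X}_1\cup\mathcal{X}_2\cup\mathcal{X}_3$ of the point set $\mathcal{X}=\{\boldsymbol{x}_1,\ldots,\boldsymbol{x}_N\}$ such that (a) $w_i=\nu_i$ for $\boldsymbol{x}_i\in\mathcal{X}_1$ and $w_i=\mu_i$ for $\boldsymbol{x}_i\in\mathcal{X}_3$; (b) if $\mathcal{X}_2=\emptyset$, then $\max_{\boldsymbol{x}_i\in\mathcal{X}_3}F_\Phi(\xi^*;\boldsymbol{x}_i)\le\min_{\boldsymbol{x}_i\in\mathcal{X}_1}F_\Phi(\xi^*;\boldsymbol{x}_i)$; (c) if $\mathcal{X}_2\neq\emptyset$, then there is a real number $s$ such that for every $\boldsymbol{x}_i\in\mathcal{X}_2$: (i) $\nu_i<w_i<\mu_i$;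 (ii) $F_\Phi(\xi^*;\boldsymbol{x}_i)=s$; and (iii) $\max_{\boldsymbol{x}_j\in\mathcal{X}_3}F_\Phi(\xi^*;\boldsymbol{x}_j)\le s\le\min_{\boldsymbol{x}_j\in\mathcal{X}_1}F_\Phi(\xi^*;\boldsymbol{x}_j)$. (Here a maximum over the empty set is $-\infty$ and a minimum over the empty set is $+\infty$.)
   Context: Setting: $N$ points $\boldsymbol{x}_1,\ldots,\boldsymbol{x}_N$ (treated as distinct by index) forming the design space $\mathcal{X}$, each with a symmetric positive semidefinite $p_1\times p_1$ information matrix $I_{\boldsymbol\theta}(\boldsymbol{x}_i)$. An (approximate) design is $\xi=\{(\boldsymbol{x}_i,w_i)\}$ with $w_i\ge0$, $\sum_i w_i=1$; its information matrix is $M(\xi)=\sum_i w_i I_{\boldsymbol\theta}(\boldsymbol{x}_i)$, and a criterion $\Phi$ is a function of $M(\xi)$ (taking value $+\infty$ when undefined, e.g. at singular $M$), written $\Phi(\xi)$; designs are added/scaled through their weight vectors. Directional derivative: $F_\Phi(\xi,\eta)=\lim_{\alpha\downarrow0}\frac{\Phi((1-\alpha)\xi+\alpha\eta)-\Phi(\xi)}{\alpha}$, and $F_\Phi(\xi;\boldsymbol{x}_i)=F_\Phi(\xi,\delta_{\boldsymbol{x}_i})$ where $\delta_{\boldsymbol{x}_i}$ is the design putting weight 1 on $\boldsymbol{x}_i$. The class $\Lambda$ consists of criteria $\Phi$ that are convex (as functions of the weight vector) and linearly differentiable, meaning that at every design $\xi$ with $\Phi(\xi)<\infty$ and every design $\eta=\{(\boldsymbol{x}_i,\lambda_i)\}$,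 $F_\Phi(\xi,\eta)$ exists and equals $\sum_i\lambda_iF_\Phi(\xi;\boldsymbol{x}_i)$; moreover for designs $\xi_1,\xi_2,\xi_3$, $\gamma\mapsto\Phi(\xi_1+\gamma(\xi_2-\xi_3))$ is infinitely differentiable on the set of $\gamma>0$ for which this is a design. Examples: $D$-optimality $\Phi=\log\det(M^{-1})$, $A$-optimality $\Phi=\mathrm{Tr}(M^{-1})$. *)

theory Defs
  imports "HOL-Analysis.Analysis" "HOL-Library.Extended_Real"
begin

text \<open>Design points are indexed by i < N; a design is its weight vector
  (weights outside the index range are 0).\<close>

definition is_design :: "nat \<Rightarrow> (nat \<Rightarrow> real) \<Rightarrow> bool" where
  "is_design N w \<longleftrightarrow> (\<forall>i<N. 0 \<le> w i) \<and> (\<forall>i\<ge>N. w i = 0) \<and> (\<Sum>i<N. w i) = 1"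

definition dirac :: "nat \<Rightarrow> nat \<Rightarrow> real" where
  "dirac i = (\<lambda>j. if j = i then 1 else 0)"

definition info_mat :: "(nat \<Rightarrow> real^'p^'p) \<Rightarrow> nat \<Rightarrow> (nat \<Rightarrow> real) \<Rightarrow> real^'p^'p" where
  "info_mat I N w = (\<Sum>i<N. w i *\<^sub>R I i)"

definition crit :: "(real^'p^'p \<Rightarrow> ereal) \<Rightarrow> (nat \<Rightarrow> real^'p^'p) \<Rightarrow> nat \<Rightarrow> (nat \<Rightarrow> real) \<Rightarrow> ereal" where
  "crit Phi I N w = Phi (info_mat I N w)"

definition dquot :: "(real^'p^'p \<Rightarrow> ereal) \<Rightarrow> (nat \<Rightarrow> real^'p^'p) \<Rightarrow> nat
    \<Rightarrow> (nat \<Rightarrow> real) \<Rightarrow> (nat \<Rightarrow> real) \<Rightarrow> real \<Rightarrow> ereal" where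
  "dquot Phi I N xi eta \<alpha> =
     (crit Phi I N (\<lambda>i. (1 - \<alpha>) * xi i + \<alpha> * eta i) - crit Phi I N xi) / ereal \<alpha>"

text \<open>Directional derivative F_Phi(xi, eta) (real-valued, meaningful when the limit exists
  as a real number).\<close>
definition dir_deriv :: "(real^'p^'p \<Rightarrow> ereal) \<Rightarrow> (nat \<Rightarrow> real^'p^'p) \<Rightarrow> nat
    \<Rightarrow> (nat \<Rightarrow> real) \<Rightarrow> (nat \<Rightarrow> real) \<Rightarrow> real" where
  "dir_deriv Phi I N xi eta = real_of_ereal (Lim (at_right 0) (dquot Phi I N xi eta))"

definition convex_crit :: "(real^'p^'p \<Rightarrow> ereal) \<Rightarrow> (nat \<Rightarrow> real^'p^'p) \<Rightarrow> nat \<Rightarrow> bool" where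
  "convex_crit Phi I N \<longleftrightarrow>
     (\<forall>w1 w2 t. is_design N w1 \<longrightarrow> is_design N w2 \<longrightarrow> 0 < t \<longrightarrow> t < 1 \<longrightarrow>
        crit Phi I N (\<lambda>i. t * w1 i + (1 - t) * w2 i)
          \<le> ereal t * crit Phi I N w1 + ereal (1 - t) * crit Phi I N w2)"

definition linearly_differentiable :: "(real^'p^'p \<Rightarrow> ereal) \<Rightarrow> (nat \<Rightarrow> real^'p^'p) \<Rightarrow> nat \<Rightarrow> bool" where
  "linearly_differentiable Phi I N \<longleftrightarrow>
     (\<forall>xi eta. is_design N xi \<longrightarrow> crit Phi I N xi < \<infinity> \<longrightarrow> is_design N eta \<longrightarrow>
        (\<exists>L::real. (dquot Phi I N xi eta \<longlongrightarrow> ereal L) (at_right 0)) \<and>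
        dir_deriv Phi I N xi eta = (\<Sum>i<N. eta i * dir_deriv Phi I N xi (dirac i)))"

definition smooth_along_lines :: "(real^'p^'p \<Rightarrow> ereal) \<Rightarrow> (nat \<Rightarrow> real^'p^'p) \<Rightarrow> nat \<Rightarrow> bool" where
  "smooth_along_lines Phi I N \<longleftrightarrow>
     (\<forall>xi1 xi2 xi3. is_design N xi1 \<longrightarrow> is_design N xi2 \<longrightarrow> is_design N xi3 \<longrightarrow>
       (let g = (\<lambda>\<gamma>. crit Phi I N (\<lambda>i. xi1 i + \<gamma> * (xi2 i - xi3 i)));
            S = {\<gamma>. 0 < \<gamma> \<and> is_design N (\<lambda>i. xi1 i + \<gamma> * (xi2 i - xi3 i)) \<and> g \<gamma> < \<infinity>}
        in \<exists>f :: nat \<Rightarrow> real \<Rightarrow> real. \<forall>\<gamma>\<in>S. f 0 \<gamma> = real_of_ereal (g \<gamma>) \<and>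
             (\<forall>k. (f k has_real_derivative f (Suc k) \<gamma>) (at \<gamma> within S))))"

definition in_Lambda :: "(real^'p^'p \<Rightarrow> ereal) \<Rightarrow> (nat \<Rightarrow> real^'p^'p) \<Rightarrow> nat \<Rightarrow> bool" where
  "in_Lambda Phi I N \<longleftrightarrow> (\<forall>M. Phi M \<noteq> -\<infinity>) \<and> convex_crit Phi I N \<and>
     linearly_differentiable Phi I N \<and> smooth_along_lines Phi I N"

definition bounded_designs :: "nat \<Rightarrow> (nat \<Rightarrow> real) \<Rightarrow> (nat \<Rightarrow> real) \<Rightarrow> (nat \<Rightarrow> real) set" where
  "bounded_designs N \<nu> \<mu> = {w. is_design N w \<and> (\<forall>i<N. \<nu> i \<le> w i \<and> w i \<le> \<mu> i)}"

end

theory Submission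
  imports Defs
begin

text \<open>For a convex criterion, \<open>w\<close> minimises \<open>\<Phi>\<close> over a convex set of designs iff the directional
  derivative towards every design of the set is nonnegative. By linear differentiability,
  \<open>F\<^sub>\<Phi>(w, \<xi>) = \<Sum>\<^sub>i (\<xi>\<^sub>i - w\<^sub>i) F\<^sub>\<Phi>(w; x\<^sub>i)\<close>, so over the box-constrained simplex \<open>\<Xi>\<close> this is a linear
  condition. Moving mass \<open>t\<close> from \<open>x\<^sub>a\<close> (where \<open>w\<^sub>a > \<nu>\<^sub>a\<close>) to \<open>x\<^sub>b\<close> (where \<open>w\<^sub>b < \<mu>\<^sub>b\<close>) shows that it
  forces \<open>F\<^sub>\<Phi>(w; x\<^sub>a) \<le> F\<^sub>\<Phi>(w; x\<^sub>b)\<close>; conversely any threshold \<open>s\<close> separating these two groups of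
  derivatives makes every summand of \<open>\<Sum>\<^sub>i (\<xi>\<^sub>i - w\<^sub>i)(F\<^sub>\<Phi>(w; x\<^sub>i) - s)\<close> nonnegative.\<close>

lemma crit_neq_minf: "in_Lambda Phi I N \<Longrightarrow> crit Phi I N w \<noteq> -\<infinity>"
  unfolding in_Lambda_def crit_def by blast

lemma crit_finiteE:
  assumes "in_Lambda Phi I N" "crit Phi I N w < \<infinity>"
  obtains c where "crit Phi I N w = ereal c"
  using assms crit_neq_minf by (cases "crit Phi I N w") auto

lemma dquot_tendsto_dir_deriv:
  assumes "in_Lambda Phi I N" "is_design N w" "crit Phi I N w < \<infinity>" "is_design N eta"
  shows "(dquot Phi I N w eta \<longlongrightarrow> ereal (dir_deriv Phi I N w eta)) (at_right 0)"
proof -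
  obtain L where L: "(dquot Phi I N w eta \<longlongrightarrow> ereal L) (at_right 0)"
    using assms unfolding in_Lambda_def linearly_differentiable_def by blast
  then have "dir_deriv Phi I N w eta = L"
    unfolding dir_deriv_def using tendsto_Lim[OF _ L] by simp
  with L show ?thesis by simp
qed

lemma dir_deriv_linear:
  assumes "in_Lambda Phi I N" "is_design N w" "crit Phi I N w < \<infinity>" "is_design N eta"
  shows "dir_deriv Phi I N w eta = (\<Sum>i<N. eta i * dir_deriv Phi I N w (dirac i))"
  using assms unfolding in_Lambda_def linearly_differentiable_def by blast

lemma dir_deriv_self:
  assumes "in_Lambda Phi I N" "is_design N w" "crit Phi I N w < \<infinity>"
  shows "dir_deriv Phi I N w w = 0"
proof -
  obtain c where c: "crit Phi I N w = ereal c" using crit_finiteE[OF assms(1,3)] .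
  have "(\<lambda>i. (1 - \<alpha>) * w i + \<alpha> * w i) = w" for \<alpha> :: real
    by (auto simp: algebra_simps)
  then have "dquot Phi I N w w = (\<lambda>_. 0)"
    by (auto simp: dquot_def c zero_ereal_def)
  then have "(dquot Phi I N w w \<longlongrightarrow> 0) (at_right 0)" by simp
  with dquot_tendsto_dir_deriv[OF assms assms(2)] show ?thesis
    using tendsto_unique[OF trivial_limit_at_right_real] by fastforce
qed

lemma dir_deriv_eq_sum_diff:
  assumes "in_Lambda Phi I N" "is_design N w" "crit Phi I N w < \<infinity>" "is_design N eta"
  shows "dir_deriv Phi I N w eta = (\<Sum>i<N. (eta i - w i) * dir_deriv Phi I N w (dirac i))"
  using dir_deriv_linear[OF assms] dir_deriv_linear[OF assms(1-3) assms(2)] dir_deriv_self[OF assms(1-3)]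
  by (simp add: left_diff_distrib sum_subtractf)

lemma eventually_in_unit_interval: "\<forall>\<^sub>F \<alpha> in at_right (0::real). 0 < \<alpha> \<and> \<alpha> < 1"
  unfolding eventually_at_right_field by (rule exI[of _ 1]) auto

lemma dir_deriv_nonneg_if_min_on_segment:
  assumes Lam: "in_Lambda Phi I N" and w: "is_design N w" "crit Phi I N w < \<infinity>"
    and eta: "is_design N eta"
    and min: "\<And>\<alpha>. 0 < \<alpha> \<Longrightarrow> \<alpha> < 1 \<Longrightarrow>
      crit Phi I N w \<le> crit Phi I N (\<lambda>i. (1 - \<alpha>) * w i + \<alpha> * eta i)"
  shows "0 \<le> dir_deriv Phi I N w eta"
proof -
  obtain c where c: "crit Phi I N w = ereal c" using crit_finiteE[OF Lam w(2)] .
  have "\<forall>\<^sub>F \<alpha> in at_right 0. 0 \<le> dquot Phi I N w eta \<alpha>"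
    using eventually_in_unit_interval
  proof (rule eventually_mono)
    fix \<alpha> :: real assume \<alpha>: "0 < \<alpha> \<and> \<alpha> < 1"
    define v where "v = (\<lambda>i. (1 - \<alpha>) * w i + \<alpha> * eta i)"
    have "ereal c \<le> crit Phi I N v" using min \<alpha> c unfolding v_def by metis
    with \<alpha> crit_neq_minf[OF Lam, of v] show "0 \<le> dquot Phi I N w eta \<alpha>"
      unfolding dquot_def c v_def[symmetric]
      by (cases "crit Phi I N v") auto
  qed
  then have "0 \<le> ereal (dir_deriv Phi I N w eta)"
    by (rule tendsto_lowerbound[OF dquot_tendsto_dir_deriv[OF Lam w eta] _ trivial_limit_at_right_real])
  then show ?thesis by simp
qed

lemma crit_le_if_dir_deriv_nonneg:
  assumes Lam: "in_Lambda Phi I N" and w: "is_design N w" "crit Phi I N w < \<infinity>"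
    and xi: "is_design N xi" and nonneg: "0 \<le> dir_deriv Phi I N w xi"
  shows "crit Phi I N w \<le> crit Phi I N xi"
proof (cases "crit Phi I N xi = \<infinity>")
  case False
  obtain c where c: "crit Phi I N w = ereal c" using crit_finiteE[OF Lam w(2)] .
  obtain c' where c': "crit Phi I N xi = ereal c'"
    using False crit_neq_minf[OF Lam, of xi] by (cases "crit Phi I N xi") auto
  have "\<forall>\<^sub>F \<alpha> in at_right 0. dquot Phi I N w xi \<alpha> \<le> ereal (c' - c)"
    using eventually_in_unit_interval
  proof (rule eventually_mono)
    fix \<alpha> :: real assume \<alpha>: "0 < \<alpha> \<and> \<alpha> < 1"
    define v where "v = (\<lambda>i. (1 - \<alpha>) * w i + \<alpha> * xi i)"
    have "v = (\<lambda>i. \<alpha> * xi i + (1 - \<alpha>) * w i)" by (auto simp: v_def algebra_simps)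
    then have "crit Phi I N v \<le> ereal \<alpha> * crit Phi I N xi + ereal (1 - \<alpha>) * crit Phi I N w"
      using Lam xi w \<alpha> unfolding in_Lambda_def convex_crit_def by blast
    then have le: "crit Phi I N v \<le> ereal (\<alpha> * c' + (1 - \<alpha>) * c)"
      by (simp add: c c')
    then obtain m where m: "crit Phi I N v = ereal m"
      using crit_neq_minf[OF Lam, of v] by (cases "crit Phi I N v") auto
    with le have "m - c \<le> \<alpha> * (c' - c)" by (simp add: algebra_simps)
    then have "(m - c) / \<alpha> \<le> c' - c"
      using \<alpha> by (simp add: divide_le_eq mult.commute)
    then show "dquot Phi I N w xi \<alpha> \<le> ereal (c' - c)"
      unfolding dquot_def c v_def[symmetric] m using \<alpha> by simp
  qed
  then have "ereal (dir_deriv Phi I N w xi) \<le> ereal (c' - c)"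
    by (rule tendsto_upperbound[OF dquot_tendsto_dir_deriv[OF Lam w xi] _ trivial_limit_at_right_real])
  with nonneg show ?thesis by (simp add: c c')
qed simp

theorem optimal_iff_dir_deriv_nonneg:
  assumes Lam: "in_Lambda Phi I N" and K: "K \<subseteq> Collect (is_design N)"
    and w: "w \<in> K" "crit Phi I N w < \<infinity>"
    and segment: "\<And>\<xi> \<alpha>. \<xi> \<in> K \<Longrightarrow> 0 < \<alpha> \<Longrightarrow> \<alpha> < 1 \<Longrightarrow> (\<lambda>i. (1 - \<alpha>) * w i + \<alpha> * \<xi> i) \<in> K"
  shows "(\<forall>\<xi>\<in>K. crit Phi I N w \<le> crit Phi I N \<xi>) \<longleftrightarrow> (\<forall>\<xi>\<in>K. 0 \<le> dir_deriv Phi I N w \<xi>)"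
proof
  assume min: "\<forall>\<xi>\<in>K. crit Phi I N w \<le> crit Phi I N \<xi>"
  show "\<forall>\<xi>\<in>K. 0 \<le> dir_deriv Phi I N w \<xi>"
    using K w by (blast intro: dir_deriv_nonneg_if_min_on_segment[OF Lam] min[rule_format] segment)
next
  assume "\<forall>\<xi>\<in>K. 0 \<le> dir_deriv Phi I N w \<xi>"
  then show "\<forall>\<xi>\<in>K. crit Phi I N w \<le> crit Phi I N \<xi>"
    using K w by (blast intro: crit_le_if_dir_deriv_nonneg[OF Lam])
qed

lemma bounded_designs_subset: "bounded_designs N \<nu> \<mu> \<subseteq> Collect (is_design N)"
  by (auto simp: bounded_designs_def)

lemma bounded_designs_segment:
  assumes "w \<in> bounded_designs N \<nu> \<mu>" "\<xi> \<in> bounded_designs N \<nu> \<mu>" "0 \<le> \<alpha>" "\<alpha> \<le> 1"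
  shows "(\<lambda>i. (1 - \<alpha>) * w i + \<alpha> * \<xi> i) \<in> bounded_designs N \<nu> \<mu>"
proof -
  have "(\<Sum>i<N. (1 - \<alpha>) * w i + \<alpha> * \<xi> i) = (1 - \<alpha>) * (\<Sum>i<N. w i) + \<alpha> * (\<Sum>i<N. \<xi> i)"
    by (simp add: sum.distrib sum_distrib_left)
  moreover have "\<nu> i \<le> (1 - \<alpha>) * w i + \<alpha> * \<xi> i \<and> (1 - \<alpha>) * w i + \<alpha> * \<xi> i \<le> \<mu> i"
    if "\<nu> i \<le> w i" "w i \<le> \<mu> i" "\<nu> i \<le> \<xi> i" "\<xi> i \<le> \<mu> i" for i
    using convex_bound_le[of "w i" "\<mu> i" "\<xi> i" "1 - \<alpha>" \<alpha>]
      convex_bound_le[of "- w i" "- \<nu> i" "- \<xi> i" "1 - \<alpha>" \<alpha>] that assms(3,4) by auto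
  ultimately show ?thesis
    using assms by (auto simp: bounded_designs_def is_design_def)
qed

lemma sum_dirac_mult:
  assumes "b < N"
  shows "(\<Sum>k<N. dirac b k * f k) = (f b :: real)"
proof -
  have "(\<Sum>k<N. dirac b k * f k) = (\<Sum>k<N. if k = b then f k else 0)"
    by (intro sum.cong) (auto simp: dirac_def)
  with assms show ?thesis by simp
qed

lemma sum_dirac: "b < N \<Longrightarrow> (\<Sum>k<N. dirac b k) = 1"
  using sum_dirac_mult[of b N "\<lambda>_. 1"] by simp

lemma exchange_in_bounded_designs:
  assumes w: "w \<in> bounded_designs N \<nu> \<mu>" and nu: "0 \<le> \<nu> a"
    and ab: "a < N" "b < N" "a \<noteq> b" and t: "0 \<le> t" "t \<le> w a - \<nu> a" "t \<le> \<mu> b - w b"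
  shows "(\<lambda>k. w k + t * (dirac b k - dirac a k)) \<in> bounded_designs N \<nu> \<mu>"
proof -
  have "(\<Sum>k<N. w k + t * (dirac b k - dirac a k)) = 1"
    using ab w by (simp add: sum.distrib sum_subtractf sum_dirac bounded_designs_def is_design_def
        flip: sum_distrib_left)
  then show ?thesis
    using w nu ab t by (auto simp: bounded_designs_def is_design_def dirac_def)
qed

definition optimality_partition ::
    "nat \<Rightarrow> (nat \<Rightarrow> real) \<Rightarrow> (nat \<Rightarrow> real) \<Rightarrow> (nat \<Rightarrow> real) \<Rightarrow> (nat \<Rightarrow> real)
      \<Rightarrow> nat set \<Rightarrow> nat set \<Rightarrow> nat set \<Rightarrow> bool" where
  "optimality_partition N \<nu> \<mu> w D X1 X2 X3 \<longleftrightarrow>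
     X1 \<union> X2 \<union> X3 = {..<N} \<and> X1 \<inter> X2 = {} \<and> X1 \<inter> X3 = {} \<and> X2 \<inter> X3 = {} \<and>
     (\<forall>i\<in>X1. w i = \<nu> i) \<and> (\<forall>i\<in>X3. w i = \<mu> i) \<and>
     (X2 = {} \<longrightarrow> (\<forall>i\<in>X3. \<forall>j\<in>X1. D i \<le> D j)) \<and>
     (X2 \<noteq> {} \<longrightarrow> (\<exists>s::real. (\<forall>i\<in>X2. \<nu> i < w i \<and> w i < \<mu> i \<and> D i = s) \<and>
        (\<forall>j\<in>X3. D j \<le> s) \<and> (\<forall>j\<in>X1. s \<le> D j)))"

lemma exchange_mono_if_nonneg:
  assumes w: "w \<in> bounded_designs N \<nu> \<mu>" and nu: "0 \<le> \<nu> a"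
    and nonneg: "\<forall>\<xi>\<in>bounded_designs N \<nu> \<mu>. 0 \<le> (\<Sum>i<N. (\<xi> i - w i) * D i)"
    and ab: "a < N" "b < N" "\<nu> a < w a" "w b < \<mu> b"
  shows "D a \<le> D b"
proof (cases "a = b")
  case False
  define t where "t = min (w a - \<nu> a) (\<mu> b - w b)"
  have t: "0 < t" "t \<le> w a - \<nu> a" "t \<le> \<mu> b - w b" using ab by (auto simp: t_def)
  have "0 \<le> (\<Sum>k<N. t * (dirac b k - dirac a k) * D k)"
    using nonneg[rule_format, OF exchange_in_bounded_designs[OF w nu ab(1,2) False]] t by simp
  also have "\<dots> = t * ((\<Sum>k<N. dirac b k * D k) - (\<Sum>k<N. dirac a k * D k))"
    by (simp add: sum_subtractf sum_distrib_left algebra_simps)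
  also have "\<dots> = t * (D b - D a)" using ab by (simp add: sum_dirac_mult)
  finally show ?thesis using t by (simp add: zero_le_mult_iff)
qed simp

lemma optimality_partition_if_exchange_mono:
  assumes bounds: "\<forall>i<N. \<nu> i < \<mu> i" and w: "\<forall>i<N. \<nu> i \<le> w i \<and> w i \<le> \<mu> i"
    and mono: "\<And>a b. a < N \<Longrightarrow> b < N \<Longrightarrow> \<nu> a < w a \<Longrightarrow> w b < \<mu> b \<Longrightarrow> D a \<le> D b"
  shows "\<exists>X1 X2 X3. optimality_partition N \<nu> \<mu> w D X1 X2 X3"
proof -
  define A where "A = {i. i < N \<and> \<nu> i < w i}"
  define B where "B = {i. i < N \<and> w i < \<mu> i}"
  have AB: "D a \<le> D b" if "a \<in> A" "b \<in> B" for a b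
    using mono that by (simp add: A_def B_def)
  have "optimality_partition N \<nu> \<mu> w D (B - A) (A \<inter> B) (A - B)"
    unfolding optimality_partition_def
  proof (intro conjI impI)
    show "B - A \<union> A \<inter> B \<union> (A - B) = {..<N}"
      using bounds by (force simp: A_def B_def)
    show "\<forall>i\<in>B - A. w i = \<nu> i" "\<forall>i\<in>A - B. w i = \<mu> i"
      using w by (auto simp: A_def B_def)
    show "\<forall>i\<in>A - B. \<forall>j\<in>B - A. D i \<le> D j" using AB by blast
  next
    assume "A \<inter> B \<noteq> {}"
    then obtain i0 where i0: "i0 \<in> A" "i0 \<in> B" by blast
    show "\<exists>s. (\<forall>i\<in>A \<inter> B. \<nu> i < w i \<and> w i < \<mu> i \<and> D i = s) \<and>
        (\<forall>j\<in>A - B. D j \<le> s) \<and> (\<forall>j\<in>B - A. s \<le> D j)"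
      using AB i0 by (intro exI[of _ "D i0"]) (force simp: A_def B_def intro: order.antisym)
  qed auto
  then show ?thesis by blast
qed

lemma threshold_between_finite_sets:
  fixes f :: "'a \<Rightarrow> real"
  assumes "finite A" "finite B" "\<forall>a\<in>A. \<forall>b\<in>B. f a \<le> f b"
  obtains s where "\<forall>a\<in>A. f a \<le> s" "\<forall>b\<in>B. s \<le> f b"
proof (cases "A = {}")
  case True
  then show ?thesis using assms(2) by (intro that[of "Min (insert 0 (f ` B))"]) auto
next
  case False
  then show ?thesis using assms by (intro that[of "Max (f ` A)"]) auto
qed

lemma threshold_if_optimality_partition:
  assumes "optimality_partition N \<nu> \<mu> w D X1 X2 X3"
  obtains s where "\<forall>k<N. (\<nu> k < w k \<longrightarrow> D k \<le> s) \<and> (w k < \<mu> k \<longrightarrow> s \<le> D k)"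
proof -
  note X = assms[unfolded optimality_partition_def]
  have cover: "X1 \<union> X2 \<union> X3 = {..<N}" and X1: "\<forall>i\<in>X1. w i = \<nu> i"
    and X3: "\<forall>i\<in>X3. w i = \<mu> i" using X by blast+
  obtain s where s: "\<forall>i\<in>X2. D i = s" "\<forall>j\<in>X3. D j \<le> s" "\<forall>j\<in>X1. s \<le> D j"
  proof (cases "X2 = {}")
    case True
    have "finite X3" "finite X1" using cover by (metis finite_Un finite_lessThan)+
    with True X show ?thesis
      by (metis empty_iff threshold_between_finite_sets that)
  next
    case False
    with X that show ?thesis by blast
  qed
  have "(\<nu> k < w k \<longrightarrow> D k \<le> s) \<and> (w k < \<mu> k \<longrightarrow> s \<le> D k)" if "k < N" for k
  proof -
    have "k \<in> X1 \<union> X2 \<union> X3" using cover that by blast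
    then show ?thesis using X1 X3 s by (elim UnE) auto
  qed
  then show ?thesis using that by blast
qed

lemma nonneg_if_threshold:
  assumes w: "w \<in> bounded_designs N \<nu> \<mu>"
    and s: "\<forall>k<N. (\<nu> k < w k \<longrightarrow> D k \<le> s) \<and> (w k < \<mu> k \<longrightarrow> s \<le> D k)"
    and xi: "\<xi> \<in> bounded_designs N \<nu> \<mu>"
  shows "0 \<le> (\<Sum>i<N. (\<xi> i - w i) * D i)"
proof -
  have "(\<Sum>i<N. (\<xi> i - w i) * s) = 0"
    using w xi by (simp add: sum_distrib_right[symmetric] sum_subtractf bounded_designs_def is_design_def)
  moreover have "(\<Sum>i<N. (\<xi> i - w i) * s) \<le> (\<Sum>i<N. (\<xi> i - w i) * D i)"
  proof (rule sum_mono)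
    fix i assume "i \<in> {..<N}"
    then have "\<nu> i \<le> \<xi> i" "\<xi> i \<le> \<mu> i" "\<nu> i \<le> w i" "w i \<le> \<mu> i"
        "(\<nu> i < w i \<longrightarrow> D i \<le> s) \<and> (w i < \<mu> i \<longrightarrow> s \<le> D i)"
      using w xi s by (auto simp: bounded_designs_def)
    then show "(\<xi> i - w i) * s \<le> (\<xi> i - w i) * D i"
      by (cases "\<xi> i < w i"; cases "w i < \<xi> i") (auto intro: mult_left_mono mult_left_mono_neg)
  qed
  ultimately show ?thesis by simp
qed

lemma nonneg_on_bounded_designs_iff_optimality_partition:
  assumes bounds: "\<forall>i<N. 0 \<le> \<nu> i \<and> \<nu> i < \<mu> i" and w_in: "w \<in> bounded_designs N \<nu> \<mu>"
  shows "(\<forall>\<xi>\<in>bounded_designs N \<nu> \<mu>. 0 \<le> (\<Sum>i<N. (\<xi> i - w i) * D i)) \<longleftrightarrow>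
    (\<exists>X1 X2 X3. optimality_partition N \<nu> \<mu> w D X1 X2 X3)"
proof
  assume nonneg: "\<forall>\<xi>\<in>bounded_designs N \<nu> \<mu>. 0 \<le> (\<Sum>i<N. (\<xi> i - w i) * D i)"
  have "D a \<le> D b" if "a < N" "b < N" "\<nu> a < w a" "w b < \<mu> b" for a b
    using exchange_mono_if_nonneg[OF w_in _ nonneg that] bounds that(1) by blast
  then show "\<exists>X1 X2 X3. optimality_partition N \<nu> \<mu> w D X1 X2 X3"
    using bounds w_in by (intro optimality_partition_if_exchange_mono) (auto simp: bounded_designs_def)
next
  assume "\<exists>X1 X2 X3. optimality_partition N \<nu> \<mu> w D X1 X2 X3"
  then obtain X1 X2 X3 where "optimality_partition N \<nu> \<mu> w D X1 X2 X3" by blast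
  then obtain s where "\<forall>k<N. (\<nu> k < w k \<longrightarrow> D k \<le> s) \<and> (w k < \<mu> k \<longrightarrow> s \<le> D k)"
    by (rule threshold_if_optimality_partition)
  then show "\<forall>\<xi>\<in>bounded_designs N \<nu> \<mu>. 0 \<le> (\<Sum>i<N. (\<xi> i - w i) * D i)"
    using nonneg_if_threshold[OF w_in] by blast
qed

lemma optimal_on_bounded_designs_iff:
  assumes Lam: "in_Lambda Phi I N" and w_in: "w \<in> bounded_designs N \<nu> \<mu>"
    and fin: "crit Phi I N w < \<infinity>"
  shows "(\<forall>\<xi>\<in>bounded_designs N \<nu> \<mu>. crit Phi I N w \<le> crit Phi I N \<xi>) \<longleftrightarrow>
    (\<forall>\<xi>\<in>bounded_designs N \<nu> \<mu>. 0 \<le> (\<Sum>i<N. (\<xi> i - w i) * dir_deriv Phi I N w (dirac i)))"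
proof -
  have w: "is_design N w" using w_in by (simp add: bounded_designs_def)
  have "(\<forall>\<xi>\<in>bounded_designs N \<nu> \<mu>. crit Phi I N w \<le> crit Phi I N \<xi>) \<longleftrightarrow>
      (\<forall>\<xi>\<in>bounded_designs N \<nu> \<mu>. 0 \<le> dir_deriv Phi I N w \<xi>)"
    using optimal_iff_dir_deriv_nonneg[OF Lam bounded_designs_subset w_in fin]
      bounded_designs_segment[OF w_in] by simp
  also have "\<dots> \<longleftrightarrow>
      (\<forall>\<xi>\<in>bounded_designs N \<nu> \<mu>. 0 \<le> (\<Sum>i<N. (\<xi> i - w i) * dir_deriv Phi I N w (dirac i)))"
  proof (intro ball_cong refl)
    fix \<xi> assume "\<xi> \<in> bounded_designs N \<nu> \<mu>"
    then show "(0 \<le> dir_deriv Phi I N w \<xi>) \<longleftrightarrow>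
        (0 \<le> (\<Sum>i<N. (\<xi> i - w i) * dir_deriv Phi I N w (dirac i)))"
      using dir_deriv_eq_sum_diff[OF Lam w fin, of \<xi>] by (simp add: bounded_designs_def)
  qed
  finally show ?thesis .
qed

theorem theorem2:
  fixes N :: nat and \<nu> \<mu> :: "nat \<Rightarrow> real"
    and I :: "nat \<Rightarrow> real^'p^'p" and Phi :: "real^'p^'p \<Rightarrow> ereal"
    and w :: "nat \<Rightarrow> real"
  assumes I_sym: "\<forall>i<N. transpose (I i) = I i"
    and I_psd: "\<forall>i<N. \<forall>v. 0 \<le> v \<bullet> (I i *v v)"
    and bounds: "\<forall>i<N. 0 \<le> \<nu> i \<and> \<nu> i < \<mu> i"
    and sum_nu: "(\<Sum>i<N. \<nu> i) \<le> 1"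
    and sum_mu: "(\<Sum>i<N. \<mu> i) \<ge> 1"
    and Lam: "in_Lambda Phi I N"
    and w_in: "w \<in> bounded_designs N \<nu> \<mu>"
    and fin: "crit Phi I N w < \<infinity>"
  shows "(\<forall>\<xi>\<in>bounded_designs N \<nu> \<mu>. crit Phi I N w \<le> crit Phi I N \<xi>) \<longleftrightarrow>
    (\<exists>X1 X2 X3. X1 \<union> X2 \<union> X3 = {..<N} \<and> X1 \<inter> X2 = {} \<and> X1 \<inter> X3 = {} \<and> X2 \<inter> X3 = {} \<and>
       (\<forall>i\<in>X1. w i = \<nu> i) \<and> (\<forall>i\<in>X3. w i = \<mu> i) \<and>
       (X2 = {} \<longrightarrow> (\<forall>i\<in>X3. \<forall>j\<in>X1.
           dir_deriv Phi I N w (dirac i) \<le> dir_deriv Phi I N w (dirac j))) \<and>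
       (X2 \<noteq> {} \<longrightarrow> (\<exists>s::real.
           (\<forall>i\<in>X2. \<nu> i < w i \<and> w i < \<mu> i \<and> dir_deriv Phi I N w (dirac i) = s) \<and>
           (\<forall>j\<in>X3. dir_deriv Phi I N w (dirac j) \<le> s) \<and>
           (\<forall>j\<in>X1. s \<le> dir_deriv Phi I N w (dirac j)))))"
proof -
  show ?thesis
    unfolding optimal_on_bounded_designs_iff[OF Lam w_in fin]
      nonneg_on_bounded_designs_iff_optimality_partition[OF bounds w_in] optimality_partition_def ..
qed

end
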